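(* Assume $\mu p<1$ and consider the model on the infinite Galton–Watson tree $\mathbb{T}$ with the information starting at the vertex $x$ at distance $r\ge 0$ from the root. Then $$ E_r (S) = \frac{1}{1 - \mu p} \bigg(1 + q \,\frac{1 - q^r}{1 - q} \,(1 - p) \bigg). $$ If instead $\mu p>1$, then $E_r(S)=\infty$ on the infinite tree.
   Context: Let $(p_k)_{k\ge 0}$ be an offspring distribution with $p_0=0$ and finite mean $\mu=\sum_k kp_k$. Let $\mathbb{T}$ be a Galton–Watson tree with root $0$ and offspring distribution $(p_k)$. Fix $p,q\in(0,1)$. Each edge of the tree is replaced by two arrows: the arrow parent $\to$ offspring is open with probability $p$ and the arrow offspring $\to$ parent is open with probability $q$, all arrows independently of each other and of the tree. The source of the information is a vertex $x$ at distance $r$ from the root chosen independently of the offspring numbers of its ancestors and of the percolation (e.g. the vertex obtained from the root by always moving to the first offspring). The cluster is $\mathscr{C}=\{y: \text{there is a directed open path from } x \text{ to } y\}$ (including $x$) and $S=\operatorname{card}(\mathscr{C})$. $E_r$ denotes expectation over both the tree and the percolation when the source is at distance $r$ from the root. *)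

theory Defs
  imports "HOL-Probability.Probability"
begin

text \<open>Vertices of the Ulam-Harris tree are lists of child indices, stored in reversed
order: the i-th child (i = 0,1,...) of vertex v is i # v; the root is [].
A sample point \<omega> assigns to each vertex v a triple (N v, D v, U v):
N v is the number of offspring of v, D v says whether the arrow parent(v) -> v is open,
U v says whether the arrow v -> parent(v) is open (the marks of the root are unused).\<close>

type_synonym sample = "nat list \<Rightarrow> nat \<times> bool \<times> bool"

definition offs :: "sample \<Rightarrow> nat list \<Rightarrow> nat" where
  "offs \<omega> v = fst (\<omega> v)"

definition down_open :: "sample \<Rightarrow> nat list \<Rightarrow> bool" where
  "down_open \<omega> v = fst (snd (\<omega> v))"

definition up_open :: "sample \<Rightarrow> nat list \<Rightarrow> bool" where
  "up_open \<omega> v = snd (snd (\<omega> v))"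

inductive_set gw_tree :: "sample \<Rightarrow> nat list set" for \<omega> where
  root: "[] \<in> gw_tree \<omega>"
| child: "v \<in> gw_tree \<omega> \<Longrightarrow> i < offs \<omega> v \<Longrightarrow> i # v \<in> gw_tree \<omega>"

definition open_arrow :: "sample \<Rightarrow> nat list \<Rightarrow> nat list \<Rightarrow> bool" where
  "open_arrow \<omega> a b \<longleftrightarrow>
     (\<exists>i. b = i # a \<and> b \<in> gw_tree \<omega> \<and> down_open \<omega> b) \<or>
     (\<exists>i. a = i # b \<and> a \<in> gw_tree \<omega> \<and> up_open \<omega> a)"

definition cluster :: "sample \<Rightarrow> nat list \<Rightarrow> nat list set" where
  "cluster \<omega> x = {y. (open_arrow \<omega>)\<^sup>*\<^sup>* x y}"

definition cluster_size :: "sample \<Rightarrow> nat list \<Rightarrow> ennreal" where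
  "cluster_size \<omega> x = emeasure (count_space UNIV) (cluster \<omega> x)"

definition gw_perc :: "nat pmf \<Rightarrow> real \<Rightarrow> real \<Rightarrow> sample measure" where
  "gw_perc P p q = PiM UNIV (\<lambda>v. measure_pmf (pair_pmf P (pair_pmf (bernoulli_pmf p) (bernoulli_pmf q))))"

text \<open>Source at distance r: obtained from the root by always moving to the first offspring.\<close>
definition source :: "nat \<Rightarrow> nat list" where
  "source r = replicate r 0"

definition expected_cluster_size :: "nat pmf \<Rightarrow> real \<Rightarrow> real \<Rightarrow> nat \<Rightarrow> ennreal" where
  "expected_cluster_size P p q r = (\<integral>\<^sup>+ \<omega>. cluster_size \<omega> (source r) \<partial>gw_perc P p q)"

end

theory Submission
  imports Defs
begin

text \<open>Write each vertex as w @ source k, where source k (k \<le> r) is its deepest common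
ancestor with the source x = source r and w is the descent from there. The vertex lies in the
cluster iff the r - k upward arrows from x to source k and the arrows down along w are open,
an event of probability q^(r-k) times the product of p P(N > i) over the child indices i of w.
Summed over the descents of length m this gives (\<mu> p)^m, so each spine vertex carries a
geometric series in \<mu> p, finite iff \<mu> p < 1. For k < r the descent has to leave the spine
at its first step (child index \<noteq> 0), which removes the term p from \<mu> p = \<Sum>i. p P(N > i).\<close>

section \<open>Products, counting measures and geometric sums\<close>

lemma PiM_pmf_cylinder:
  fixes Q :: "'b pmf" and g :: "'c \<Rightarrow> 'a"
  assumes "finite I" "inj_on g I"
  shows "{\<omega>. \<forall>a\<in>I. \<omega> (g a) \<in> B a} \<in> sets (PiM UNIV (\<lambda>_. measure_pmf Q))"
    and "emeasure (PiM UNIV (\<lambda>_. measure_pmf Q)) {\<omega>. \<forall>a\<in>I. \<omega> (g a) \<in> B a}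
           = (\<Prod>a\<in>I. emeasure (measure_pmf Q) (B a))"
proof -
  interpret product_prob_space "\<lambda>_. measure_pmf Q" UNIV
    by unfold_locales
  define X where "X v = B (the_inv_into I g v)" for v
  have eq: "{\<omega>. \<forall>a\<in>I. \<omega> (g a) \<in> B a}
      = prod_emb UNIV (\<lambda>_. measure_pmf Q) (g ` I) (Pi\<^sub>E (g ` I) X)"
    using assms(2) by (auto simp: prod_emb_def space_PiM X_def the_inv_into_f_f Pi_iff)
  show "{\<omega>. \<forall>a\<in>I. \<omega> (g a) \<in> B a} \<in> sets (PiM UNIV (\<lambda>_. measure_pmf Q))"
    unfolding eq using assms(1) by (intro measurable_prod_emb sets_PiM_I_finite) auto
  have "emeasure (PiM UNIV (\<lambda>_. measure_pmf Q)) {\<omega>. \<forall>a\<in>I. \<omega> (g a) \<in> B a}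
      = (\<Prod>v\<in>g ` I. emeasure (measure_pmf Q) (X v))"
    unfolding eq using assms(1) by (intro emeasure_PiM_emb) auto
  also have "\<dots> = (\<Prod>a\<in>I. emeasure (measure_pmf Q) (B a))"
    using assms(2) by (simp add: prod.reindex X_def the_inv_into_f_f)
  finally show "emeasure (PiM UNIV (\<lambda>_. measure_pmf Q)) {\<omega>. \<forall>a\<in>I. \<omega> (g a) \<in> B a}
      = (\<Prod>a\<in>I. emeasure (measure_pmf Q) (B a))" .
qed

lemma emeasure_pair_pmf_Times3:
  fixes P :: "'a::countable pmf" and Q :: "'b::countable pmf" and R :: "'c::countable pmf"
  shows "emeasure (measure_pmf (pair_pmf P (pair_pmf Q R))) (A \<times> B \<times> C)
     = ennreal (measure_pmf.prob P A * measure_pmf.prob Q B * measure_pmf.prob R C)"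
  by (simp add: measure_pmf.emeasure_eq_measure measure_pmf_prob_product)

lemma nn_integral_count_space_Sigma:
  fixes f :: "'a::countable \<times> 'b::countable \<Rightarrow> ennreal"
  shows "(\<integral>\<^sup>+z. f z \<partial>count_space (Sigma A B))
    = (\<integral>\<^sup>+a. \<integral>\<^sup>+b. f (a, b) \<partial>count_space (B a) \<partial>count_space A)"
proof -
  have prod: "count_space UNIV \<Otimes>\<^sub>M count_space UNIV = count_space (UNIV :: ('a \<times> 'b) set)"
    by (simp add: pair_measure_countable)
  have "(\<integral>\<^sup>+a. \<integral>\<^sup>+b. g (a, b) \<partial>count_space UNIV \<partial>count_space UNIV)
      = integral\<^sup>N (count_space UNIV \<Otimes>\<^sub>M count_space UNIV) g" for g :: "'a \<times> 'b \<Rightarrow> ennreal"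
    by (rule sigma_finite_measure.nn_integral_fst[OF sigma_finite_measure_count_space_countable])
       (simp_all add: prod)
  then have "(\<integral>\<^sup>+a. \<integral>\<^sup>+b. f (a, b) * indicator (Sigma A B) (a, b) \<partial>count_space UNIV \<partial>count_space UNIV)
      = (\<integral>\<^sup>+z. f z * indicator (Sigma A B) z \<partial>count_space UNIV)"
    by (simp add: prod)
  moreover have "f (a, b) * indicator (Sigma A B) (a, b) = f (a, b) * indicator (B a) b * indicator A a"
    for a b by (simp split: split_indicator)
  ultimately show ?thesis
    by (simp add: nn_integral_count_space_indicator nn_integral_multc)
qed

lemma nn_integral_count_space_Un:
  "A \<inter> B = {} \<Longrightarrow>
    (\<integral>\<^sup>+x. f x \<partial>count_space (A \<union> B)) = (\<integral>\<^sup>+x. f x \<partial>count_space A) + (\<integral>\<^sup>+x. f x \<partial>count_space B)"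
  by (simp add: nn_integral_count_space_indicator nn_integral_disjoint_pair_countspace)

lemma suminf_ennreal_geometric:
  assumes "0 \<le> a" "a < 1"
  shows "(\<Sum>m. ennreal a ^ m) = ennreal (1 / (1 - a))"
proof -
  have "(\<Sum>m. ennreal a ^ m) = (\<Sum>m. ennreal (a ^ m))"
    using assms by (simp add: ennreal_power)
  also have "\<dots> = ennreal (\<Sum>m. a ^ m)"
    using assms by (intro suminf_ennreal2) (auto intro: summable_geometric)
  also have "\<dots> = ennreal (1 / (1 - a))"
    using assms by (simp add: suminf_geometric)
  finally show ?thesis .
qed

lemma suminf_ennreal_geometric_infinite:
  assumes "1 \<le> a"
  shows "(\<Sum>m. ennreal a ^ m) = \<infinity>"
proof -
  have "\<not> summable (\<lambda>m. a ^ m)"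
    using assms by (simp add: summable_geometric_iff)
  have "(\<Sum>m. ennreal (a ^ m)) = \<infinity>"
  proof (rule ccontr)
    assume "(\<Sum>m. ennreal (a ^ m)) \<noteq> \<infinity>"
    then have "summable (\<lambda>m. a ^ m)"
      using assms by (intro summable_suminf_not_top) simp_all
    with \<open>\<not> summable (\<lambda>m. a ^ m)\<close> show False ..
  qed
  then show ?thesis
    using assms by (simp add: ennreal_power)
qed

lemma sum_lessThan_power_diff:
  fixes q :: real
  assumes "q \<noteq> 1"
  shows "(\<Sum>k<r. q ^ (r - k)) = q * ((1 - q ^ r) / (1 - q))"
proof (induction r)
  case (Suc r)
  have "(\<Sum>k<Suc r. q ^ (Suc r - k)) = q * (\<Sum>k<r. q ^ (r - k)) + q"
    by (simp add: Suc_diff_le sum_distrib_left)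
  also have "\<dots> = q * ((1 - q ^ Suc r) / (1 - q))"
    unfolding Suc.IH using assms by (simp add: field_simps)
  finally show ?case .
qed simp

section \<open>Vertices reached from the source\<close>

lemma gw_tree_parent: "i # v \<in> gw_tree \<omega> \<Longrightarrow> v \<in> gw_tree \<omega> \<and> i < offs \<omega> v"
  by (erule gw_tree.cases) auto

lemma gw_tree_tl: "v \<in> gw_tree \<omega> \<Longrightarrow> tl v \<in> gw_tree \<omega>"
  by (cases v) (auto dest: gw_tree_parent)

lemma gw_tree_drop: "v \<in> gw_tree \<omega> \<Longrightarrow> drop n v \<in> gw_tree \<omega>"
  by (induction n arbitrary: v) (auto simp: drop_Suc gw_tree_tl)

lemma source_Suc: "source (Suc k) = 0 # source k"
  by (simp add: source_def)

lemma source_in_gw_tree: "source r \<in> gw_tree \<omega> \<Longrightarrow> k \<le> r \<Longrightarrow> source k \<in> gw_tree \<omega>"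
  using gw_tree_drop[of "source r" \<omega> "r - k"] by (simp add: source_def)

fun open_descent :: "sample \<Rightarrow> nat list \<Rightarrow> nat list \<Rightarrow> bool" where
  "open_descent \<omega> [] z \<longleftrightarrow> True"
| "open_descent \<omega> (i # w) z \<longleftrightarrow>
     open_descent \<omega> w z \<and> i < offs \<omega> (w @ z) \<and> down_open \<omega> (i # w @ z)"

lemma open_descent_in_gw_tree: "z \<in> gw_tree \<omega> \<Longrightarrow> open_descent \<omega> w z \<Longrightarrow> w @ z \<in> gw_tree \<omega>"
  by (induction w) (auto intro: gw_tree.child)

lemma open_descent_reaches:
  "z \<in> gw_tree \<omega> \<Longrightarrow> open_descent \<omega> w z \<Longrightarrow> (open_arrow \<omega>)\<^sup>*\<^sup>* z (w @ z)"
proof (induction w)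
  case (Cons i w)
  then have "open_arrow \<omega> (w @ z) (i # w @ z)"
    using open_descent_in_gw_tree[of z \<omega> "i # w"] by (auto simp: open_arrow_def)
  with Cons show ?case by (auto intro: rtranclp.rtrancl_into_rtrancl)
qed simp

lemma open_ascent_reaches:
  assumes "source r \<in> gw_tree \<omega>" "k \<le> r" "\<forall>j\<in>{k<..r}. up_open \<omega> (source j)"
  shows "(open_arrow \<omega>)\<^sup>*\<^sup>* (source r) (source k)"
  using assms(2,3)
proof (induction "r - k" arbitrary: k)
  case (Suc d)
  then have "(open_arrow \<omega>)\<^sup>*\<^sup>* (source r) (source (Suc k))"
    using Suc.hyps(1)[of "Suc k"] by auto
  moreover have "open_arrow \<omega> (source (Suc k)) (source k)"
    using Suc source_in_gw_tree[OF assms(1), of "Suc k"]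
    by (auto simp: open_arrow_def source_Suc dest: bspec[of _ _ "Suc k"])
  ultimately show ?case by (rule rtranclp.rtrancl_into_rtrancl)
qed simp

definition cluster_event :: "nat \<Rightarrow> nat \<Rightarrow> nat list \<Rightarrow> sample \<Rightarrow> bool" where
  "cluster_event r k w \<omega> \<longleftrightarrow>
     (\<forall>j\<in>{k<..r}. up_open \<omega> (source j)) \<and> open_descent \<omega> w (source k)"

lemma cluster_event_reaches:
  assumes "source r \<in> gw_tree \<omega>" "k \<le> r" "cluster_event r k w \<omega>"
  shows "(open_arrow \<omega>)\<^sup>*\<^sup>* (source r) (w @ source k)"
  using open_ascent_reaches[OF assms(1,2)] open_descent_reaches[OF source_in_gw_tree[OF assms(1,2)]]
    assms(3) unfolding cluster_event_def by (blast intro: rtranclp_trans)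

text \<open>Vertices are reversed paths, so last w is the first step of the descent from source k;
the condition makes source k the deepest common ancestor of w @ source k and source r.\<close>

definition spine_coords :: "nat \<Rightarrow> (nat \<times> nat list) set" where
  "spine_coords r = {(k, w). k \<le> r \<and> (k = r \<or> w = [] \<or> last w \<noteq> 0)}"

lemma source_add: "source (m + k) = source m @ source k"
  by (simp add: source_def replicate_add)

lemma spine_coords_zero_suffix:
  assumes "(k, u @ source (Suc n)) \<in> spine_coords r"
  shows "k = r"
  using assms by (auto simp: spine_coords_def source_def split: if_splits)

lemma spine_coords_off_spine:
  assumes "(k, w) \<in> spine_coords r" "k < j" "j \<le> r"
  shows "drop d w @ source k \<noteq> source j"
proof
  assume "drop d w @ source k = source j"
  also have "source j = source (j - k) @ source k"
    using assms(2) source_add[of "j - k" k] by simp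
  finally have "w = take d w @ source (Suc (j - Suc k))"
    using assms(2) by (metis Suc_diff_Suc append_same_eq append_take_drop_id)
  with assms show False
    using spine_coords_zero_suffix[of k "take d w" "j - Suc k" r] by auto
qed

lemma spine_coords_inj:
  assumes "(k, w) \<in> spine_coords r" "(k', w') \<in> spine_coords r" "w @ source k = w' @ source k'"
  shows "k = k' \<and> w = w'"
proof -
  have k_eq: "k = k'"
    if kw: "(k, w) \<in> spine_coords r" "(k', w') \<in> spine_coords r"
      and eq: "w @ source k = w' @ source k'" and "k \<le> k'" for k w k' w'
  proof (rule ccontr)
    assume "k \<noteq> k'"
    with \<open>k \<le> k'\<close> have "source k' = source (Suc (k' - Suc k)) @ source k"
      by (simp add: source_add[symmetric])
    with eq have "w = w' @ source (Suc (k' - Suc k))" by simp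
    with kw(1) have "k = r" using spine_coords_zero_suffix by blast
    with kw(2) \<open>k \<noteq> k'\<close> \<open>k \<le> k'\<close> show False by (simp add: spine_coords_def)
  qed
  have "k = k'" using k_eq[OF assms] k_eq[OF assms(2,1) assms(3)[symmetric]] by linarith
  with assms(3) show ?thesis by simp
qed

lemma spine_coords_exist: "\<exists>k w. (k, w) \<in> spine_coords r \<and> y = w @ source k"
proof (induction y)
  case Nil
  show ?case by (intro exI[of _ 0] exI[of _ "[]"]) (simp add: spine_coords_def source_def)
next
  case (Cons a y)
  then obtain k w where kw: "(k, w) \<in> spine_coords r" "y = w @ source k" by blast
  show ?case
  proof (cases "w = [] \<and> k < r \<and> a = 0")
    case True
    with kw show ?thesis
      by (intro exI[of _ "Suc k"] exI[of _ "[]"]) (auto simp: spine_coords_def source_Suc)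
  next
    case False
    with kw show ?thesis
      by (intro exI[of _ k] exI[of _ "a # w"]) (auto simp: spine_coords_def)
  qed
qed

lemma bij_betw_spine_coords: "bij_betw (\<lambda>(k, w). w @ source k) (spine_coords r) UNIV"
proof -
  have "inj_on (\<lambda>(k, w). w @ source k) (spine_coords r)"
    using spine_coords_inj[of _ _ r] by (auto simp: inj_on_def)
  moreover have "y \<in> (\<lambda>(k, w). w @ source k) ` spine_coords r" for y
    using spine_coords_exist[of r y] by force
  ultimately show ?thesis by (auto simp: bij_betw_def)
qed

lemma cluster_event_Cons:
  assumes "(k, w) \<in> spine_coords r" "cluster_event r k w \<omega>"
    and "i # w @ source k \<in> gw_tree \<omega>" "down_open \<omega> (i # w @ source k)"
  shows "\<exists>k' w'. (k', w') \<in> spine_coords r \<and> i # w @ source k = w' @ source k'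
           \<and> cluster_event r k' w' \<omega>"
proof (cases "w = [] \<and> k < r \<and> i = 0")
  case True
  with assms show ?thesis
    by (intro exI[of _ "Suc k"] exI[of _ "[]"])
       (auto simp: spine_coords_def cluster_event_def source_Suc)
next
  case False
  have "i < offs \<omega> (w @ source k)" using assms(3) gw_tree_parent by blast
  with False assms show ?thesis
    by (intro exI[of _ k] exI[of _ "i # w"]) (auto simp: spine_coords_def cluster_event_def)
qed

lemma cluster_event_tl:
  assumes "(k, w) \<in> spine_coords r" "cluster_event r k w \<omega>"
    and "w @ source k = i # y" "up_open \<omega> (i # y)"
  shows "\<exists>k' w'. (k', w') \<in> spine_coords r \<and> y = w' @ source k' \<and> cluster_event r k' w' \<omega>"
proof (cases w)
  case Nil
  with assms(3) obtain k' where k': "k = Suc k'" "y = source k'"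
    by (cases k) (auto simp: source_def)
  have "up_open \<omega> (source j)" if "k' < j" "j \<le> r" for j
    using that assms k' Nil by (cases "j = k") (auto simp: cluster_event_def)
  with assms(1) k' show ?thesis
    by (intro exI[of _ k'] exI[of _ "[]"]) (auto simp: spine_coords_def cluster_event_def)
next
  case (Cons a w')
  with assms show ?thesis
    by (intro exI[of _ k] exI[of _ w']) (auto simp: spine_coords_def cluster_event_def split: if_splits)
qed

lemma reachable_from_source:
  assumes "(open_arrow \<omega>)\<^sup>*\<^sup>* (source r) y"
  shows "\<exists>k w. (k, w) \<in> spine_coords r \<and> y = w @ source k \<and> cluster_event r k w \<omega>"
  using assms
proof (induction rule: rtranclp_induct)
  case base
  show ?case
    by (intro exI[of _ r] exI[of _ "[]"]) (simp add: spine_coords_def cluster_event_def)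
next
  case (step y y')
  then obtain k w where kw: "(k, w) \<in> spine_coords r" "y = w @ source k" "cluster_event r k w \<omega>"
    by blast
  from step.hyps(2) consider
      (down) i where "y' = i # y" "y' \<in> gw_tree \<omega>" "down_open \<omega> y'"
    | (up) i where "y = i # y'" "up_open \<omega> y"
    unfolding open_arrow_def by blast
  then show ?case
    by cases (use kw cluster_event_Cons cluster_event_tl in auto)
qed

lemma mem_cluster_iff_cluster_event:
  assumes "source r \<in> gw_tree \<omega>" "(k, w) \<in> spine_coords r"
  shows "w @ source k \<in> cluster \<omega> (source r) \<longleftrightarrow> cluster_event r k w \<omega>"
proof
  assume "w @ source k \<in> cluster \<omega> (source r)"
  then obtain k' w' where "(k', w') \<in> spine_coords r" "w @ source k = w' @ source k'"
      "cluster_event r k' w' \<omega>"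
    unfolding cluster_def using reachable_from_source by blast
  with spine_coords_inj[OF assms(2)] show "cluster_event r k w \<omega>" by blast
next
  assume "cluster_event r k w \<omega>"
  with assms show "w @ source k \<in> cluster \<omega> (source r)"
    unfolding cluster_def by (auto simp: spine_coords_def intro: cluster_event_reaches)
qed

lemma cluster_size_eq_nn_integral:
  assumes "source r \<in> gw_tree \<omega>"
  shows "cluster_size \<omega> (source r)
    = (\<integral>\<^sup>+(k, w). indicator {\<omega>. cluster_event r k w \<omega>} \<omega> \<partial>count_space (spine_coords r))"
proof -
  have "cluster_size \<omega> (source r) = (\<integral>\<^sup>+y. indicator (cluster \<omega> (source r)) y \<partial>count_space UNIV)"
    by (simp add: cluster_size_def)
  also have "\<dots> = (\<integral>\<^sup>+(k, w). indicator (cluster \<omega> (source r)) (w @ source k)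
                    \<partial>count_space (spine_coords r))"
    using nn_integral_bij_count_space[OF bij_betw_spine_coords, where f="indicator (cluster \<omega> (source r))"]
    by (simp add: prod.case_distrib)
  also have "\<dots> = (\<integral>\<^sup>+(k, w). indicator {\<omega>. cluster_event r k w \<omega>} \<omega> \<partial>count_space (spine_coords r))"
    using mem_cluster_iff_cluster_event[OF assms]
    by (intro nn_integral_cong) (auto simp: indicator_def)
  finally show ?thesis .
qed

section \<open>Probability of the cluster events\<close>

definition tail_prob :: "nat pmf \<Rightarrow> nat \<Rightarrow> real" where
  "tail_prob P i = measure_pmf.prob P {n. i < n}"

definition descent_weight :: "nat pmf \<Rightarrow> real \<Rightarrow> nat list \<Rightarrow> real" where
  "descent_weight P p w = prod_list (map (\<lambda>i. p * tail_prob P i) w)"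

lemma tail_prob_nonneg: "0 \<le> tail_prob P i"
  by (simp add: tail_prob_def)

lemma tail_prob_0:
  assumes "pmf P 0 = 0"
  shows "tail_prob P 0 = 1"
proof -
  have "{n::nat. 0 < n} = UNIV - {0}" by auto
  then show ?thesis
    using assms measure_pmf.prob_compl[of "{0}" P] by (simp add: tail_prob_def measure_pmf_single)
qed

lemma descent_weight_Nil [simp]: "descent_weight P p [] = 1"
  by (simp add: descent_weight_def)

lemma descent_weight_Cons [simp]:
  "descent_weight P p (i # w) = p * tail_prob P i * descent_weight P p w"
  by (simp add: descent_weight_def)

lemma descent_weight_snoc: "descent_weight P p (w @ [i]) = descent_weight P p w * (p * tail_prob P i)"
  by (simp add: descent_weight_def)

lemma descent_weight_nonneg: "0 \<le> p \<Longrightarrow> 0 \<le> descent_weight P p w"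
  by (induction w) (auto simp: tail_prob_nonneg)

lemma AE_source_in_gw_tree:
  assumes "pmf P 0 = 0"
  shows "AE \<omega> in gw_perc P p q. source r \<in> gw_tree \<omega>"
proof -
  interpret prob_space "gw_perc P p q"
    unfolding gw_perc_def by (intro prob_space_PiM) (simp add: measure_pmf.prob_space_axioms)
  let ?A = "{\<omega>. \<forall>j\<in>{..<r}. \<omega> (source j) \<in> {n. 0 < n} \<times> UNIV}"
  have "emeasure (measure_pmf (pair_pmf P (pair_pmf (bernoulli_pmf p) (bernoulli_pmf q))))
      ({n. 0 < n} \<times> UNIV) = 1"
    using emeasure_pair_pmf_Times3[of P "bernoulli_pmf p" "bernoulli_pmf q" "{n. 0 < n}" UNIV UNIV] tail_prob_0[OF assms]
    by (simp add: tail_prob_def)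
  moreover have "inj_on source {..<r}"
    by (auto simp: inj_on_def source_def)
  ultimately have "emeasure (gw_perc P p q) ?A = 1"
    unfolding gw_perc_def by (simp add: PiM_pmf_cylinder)
  then have "AE \<omega> in gw_perc P p q. \<omega> \<in> ?A"
    by (intro AE_prob_1) (simp add: emeasure_eq_measure)
  then show ?thesis
  proof eventually_elim
    case (elim \<omega>)
    then have "\<forall>j<r. 0 < offs \<omega> (source j)" by (auto simp: offs_def mem_Times_iff)
    then show ?case by (induction r) (auto simp: source_def intro: gw_tree.intros)
  qed
qed

text \<open>The cluster event as a cylinder set: the site Inl j is the spine vertex source j, whose
upward arrow must be open; the site Inr d is the vertex drop d w @ source k of the descent,
which must be entered by an open arrow (if d < length w) and have more than w ! (d - 1)
offspring (if 0 < d).\<close>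

definition cluster_event_sites :: "nat \<Rightarrow> nat \<Rightarrow> nat list \<Rightarrow> (nat + nat) set" where
  "cluster_event_sites r k w = Inl ` {k<..r} \<union> Inr ` {..length w}"

definition cluster_event_vertex :: "nat \<Rightarrow> nat list \<Rightarrow> nat + nat \<Rightarrow> nat list" where
  "cluster_event_vertex k w = case_sum source (\<lambda>d. drop d w @ source k)"

definition cluster_event_marks :: "nat list \<Rightarrow> nat + nat \<Rightarrow> (nat \<times> bool \<times> bool) set" where
  "cluster_event_marks w = case_sum (\<lambda>_. UNIV \<times> UNIV \<times> {True})
     (\<lambda>d. (if 0 < d then {n. w ! (d - 1) < n} else UNIV) \<times> (if d < length w then {True} else UNIV)
          \<times> UNIV)"

lemma open_descent_iff_nth:
  "open_descent \<omega> w z \<longleftrightarrow> (\<forall>d\<le>length w. (d < length w \<longrightarrow> down_open \<omega> (drop d w @ z))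
      \<and> (0 < d \<longrightarrow> w ! (d - 1) < offs \<omega> (drop d w @ z)))"
  by (induction w) (auto simp: less_Suc_eq_le[symmetric] All_less_Suc2 nth_Cons')

lemma cluster_event_iff_cylinder:
  "cluster_event r k w \<omega> \<longleftrightarrow>
     (\<forall>a\<in>cluster_event_sites r k w. \<omega> (cluster_event_vertex k w a) \<in> cluster_event_marks w a)"
proof -
  have "(\<forall>a\<in>cluster_event_sites r k w. \<phi> a) \<longleftrightarrow>
      (\<forall>j\<in>{k<..r}. \<phi> (Inl j)) \<and> (\<forall>d\<le>length w. \<phi> (Inr d))" for \<phi>
    by (auto simp: cluster_event_sites_def)
  moreover have "\<omega> v \<in> UNIV \<times> UNIV \<times> {True} \<longleftrightarrow> up_open \<omega> v" for v
    by (simp add: mem_Times_iff up_open_def)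
  moreover have "\<omega> v \<in> (if 0 < d then {n. w ! (d - 1) < n} else UNIV)
        \<times> (if d < length w then {True} else UNIV) \<times> UNIV
      \<longleftrightarrow> (d < length w \<longrightarrow> down_open \<omega> v) \<and> (0 < d \<longrightarrow> w ! (d - 1) < offs \<omega> v)" for v d
    by (auto simp: mem_Times_iff down_open_def offs_def)
  ultimately show ?thesis
    by (simp add: cluster_event_def cluster_event_vertex_def cluster_event_marks_def
        open_descent_iff_nth)
qed

lemma inj_on_cluster_event_vertex:
  assumes "(k, w) \<in> spine_coords r"
  shows "inj_on (cluster_event_vertex k w) (cluster_event_sites r k w)"
  using spine_coords_off_spine[OF assms] spine_coords_off_spine[OF assms, symmetric]
  unfolding inj_on_def cluster_event_sites_def cluster_event_vertex_def
  by (auto dest: arg_cong[of _ _ length] simp: source_def)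

lemma descent_weight_eq_prod:
  "descent_weight P p w = (\<Prod>d\<le>length w.
     (if 0 < d then tail_prob P (w ! (d - 1)) else 1) * (if d < length w then p else 1))"
proof -
  have "(\<Prod>d\<le>length w. if 0 < d then tail_prob P (w ! (d - 1)) else 1)
      = (\<Prod>d<length w. tail_prob P (w ! d))"
    unfolding lessThan_Suc_atMost[symmetric] prod.lessThan_Suc_shift by simp
  moreover have "(\<Prod>d\<le>length w. if d < length w then p else 1) = p ^ length w"
    unfolding lessThan_Suc_atMost[symmetric] by (simp add: prod.lessThan_Suc)
  ultimately show ?thesis
    by (simp add: prod.distrib descent_weight_def prod.list_conv_set_nth atLeast0LessThan)
qed

lemma emeasure_cluster_event:
  assumes "(k, w) \<in> spine_coords r" "0 \<le> p" "p \<le> 1" "0 \<le> q" "q \<le> 1"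
  shows "{\<omega>. cluster_event r k w \<omega>} \<in> sets (gw_perc P p q)"
    and "emeasure (gw_perc P p q) {\<omega>. cluster_event r k w \<omega>}
           = ennreal (q ^ (r - k) * descent_weight P p w)"
proof -
  let ?Q = "pair_pmf P (pair_pmf (bernoulli_pmf p) (bernoulli_pmf q))"
  have fin: "finite (cluster_event_sites r k w)"
    by (simp add: cluster_event_sites_def)
  note cylinder = PiM_pmf_cylinder[OF fin inj_on_cluster_event_vertex[OF assms(1)],
      where Q = ?Q and B = "cluster_event_marks w"]
  have eq: "{\<omega>. cluster_event r k w \<omega>} = {\<omega>. \<forall>a\<in>cluster_event_sites r k w.
      \<omega> (cluster_event_vertex k w a) \<in> cluster_event_marks w a}"
    by (simp add: cluster_event_iff_cylinder)
  show "{\<omega>. cluster_event r k w \<omega>} \<in> sets (gw_perc P p q)"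
    unfolding eq gw_perc_def by (rule cylinder(1))
  have "emeasure (gw_perc P p q) {\<omega>. cluster_event r k w \<omega>}
      = (\<Prod>a\<in>cluster_event_sites r k w. emeasure (measure_pmf ?Q) (cluster_event_marks w a))"
    unfolding eq gw_perc_def by (rule cylinder(2))
  also have "\<dots> = (\<Prod>j\<in>{k<..r}. ennreal q) * (\<Prod>d\<le>length w. ennreal
      ((if 0 < d then tail_prob P (w ! (d - 1)) else 1) * (if d < length w then p else 1)))"
    using assms(2-5) unfolding cluster_event_sites_def
    by (subst prod.union_disjoint)
       (auto simp: prod.reindex cluster_event_marks_def emeasure_pair_pmf_Times3 measure_pmf_single
         tail_prob_def intro!: prod.cong arg_cong2[where f = "(*)"])
  also have "\<dots> = ennreal (q ^ (r - k)) * ennreal (descent_weight P p w)"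
    using assms(2-5)
    by (simp add: descent_weight_eq_prod prod_ennreal tail_prob_nonneg ennreal_power prod_nonneg)
  also have "\<dots> = ennreal (q ^ (r - k) * descent_weight P p w)"
    using assms(2,4) by (simp add: ennreal_mult descent_weight_nonneg)
  finally show "emeasure (gw_perc P p q) {\<omega>. cluster_event r k w \<omega>}
      = ennreal (q ^ (r - k) * descent_weight P p w)" .
qed

lemma AE_cluster_size_eq_nn_integral:
  assumes "pmf P 0 = 0"
  shows "AE \<omega> in gw_perc P p q. cluster_size \<omega> (source r)
    = (\<integral>\<^sup>+(k, w). indicator {\<omega>. cluster_event r k w \<omega>} \<omega> \<partial>count_space (spine_coords r))"
  using AE_source_in_gw_tree[OF assms] by eventually_elim (rule cluster_size_eq_nn_integral)

lemma expected_cluster_size_eq_nn_integral: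
  assumes "pmf P 0 = 0" "0 \<le> p" "p \<le> 1" "0 \<le> q" "q \<le> 1"
  shows "expected_cluster_size P p q r
    = (\<integral>\<^sup>+(k, w). ennreal (q ^ (r - k) * descent_weight P p w) \<partial>count_space (spine_coords r))"
proof -
  have "expected_cluster_size P p q r = (\<integral>\<^sup>+\<omega>. \<integral>\<^sup>+z.
      indicator {\<omega>. cluster_event r (fst z) (snd z) \<omega>} \<omega> \<partial>count_space (spine_coords r) \<partial>gw_perc P p q)"
    unfolding expected_cluster_size_def
    using AE_cluster_size_eq_nn_integral[OF assms(1)]
    by (intro nn_integral_cong_AE) (simp add: case_prod_unfold)
  also have "\<dots> = (\<integral>\<^sup>+z. \<integral>\<^sup>+\<omega>.
      indicator {\<omega>. cluster_event r (fst z) (snd z) \<omega>} \<omega> \<partial>gw_perc P p q \<partial>count_space (spine_coords r))"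
    using emeasure_cluster_event(1)[OF _ assms(2-5)]
    by (intro nn_integral_count_space_nn_integral) auto
  also have "\<dots> = (\<integral>\<^sup>+(k, w). ennreal (q ^ (r - k) * descent_weight P p w) \<partial>count_space (spine_coords r))"
    using emeasure_cluster_event[OF _ assms(2-5)] by (intro nn_integral_cong) (auto simp: case_prod_unfold)
  finally show ?thesis .
qed

section \<open>Summing over the vertices\<close>

lemma nn_integral_spine_coords:
  fixes f :: "nat \<Rightarrow> nat list \<Rightarrow> ennreal"
  shows "(\<integral>\<^sup>+(k, w). f k w \<partial>count_space (spine_coords r))
    = (\<Sum>k<r. \<integral>\<^sup>+w. f k w \<partial>count_space {w. w = [] \<or> last w \<noteq> 0}) + (\<integral>\<^sup>+w. f r w \<partial>count_space UNIV)"
proof -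
  have "spine_coords r = Sigma {..r} (\<lambda>k. if k = r then UNIV else {w. w = [] \<or> last w \<noteq> 0})"
    by (auto simp: spine_coords_def)
  then have "(\<integral>\<^sup>+(k, w). f k w \<partial>count_space (spine_coords r)) = (\<Sum>k\<le>r.
      \<integral>\<^sup>+w. f k w \<partial>count_space (if k = r then UNIV else {w. w = [] \<or> last w \<noteq> 0}))"
    by (simp add: nn_integral_count_space_Sigma nn_integral_count_space_finite)
  also have "\<dots> = (\<Sum>k<r. \<integral>\<^sup>+w. f k w \<partial>count_space {w. w = [] \<or> last w \<noteq> 0})
      + (\<integral>\<^sup>+w. f r w \<partial>count_space UNIV)"
    by (simp add: lessThan_Suc_atMost[symmetric])
  finally show ?thesis .
qed

lemma nn_integral_descent_weight_length:
  assumes "0 \<le> p"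
  shows "(\<integral>\<^sup>+w. ennreal (descent_weight P p w) \<partial>count_space {w. length w = m})
    = (\<integral>\<^sup>+i. ennreal (p * tail_prob P i) \<partial>count_space UNIV) ^ m"
proof (induction m)
  case 0
  have "{w :: nat list. length w = 0} = {[]}" by auto
  then show ?case by (simp add: nn_integral_count_space_finite)
next
  case (Suc m)
  have "bij_betw (\<lambda>(i, u). i # u) (UNIV \<times> {u. length u = m}) {w :: nat list. length w = Suc m}"
    by (rule bij_betwI[where g = "\<lambda>w. (hd w, tl w)"]) (auto simp: length_Suc_conv)
  then have "(\<integral>\<^sup>+w. ennreal (descent_weight P p w) \<partial>count_space {w. length w = Suc m})
      = (\<integral>\<^sup>+z. ennreal (descent_weight P p ((\<lambda>(i, u). i # u) z))
          \<partial>count_space (UNIV \<times> {u. length u = m}))"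
    by (rule nn_integral_bij_count_space[symmetric])
  also have "\<dots> = (\<integral>\<^sup>+i. \<integral>\<^sup>+u. ennreal (p * tail_prob P i) * ennreal (descent_weight P p u)
      \<partial>count_space {u. length u = m} \<partial>count_space UNIV)"
    using assms
    by (simp add: nn_integral_count_space_Sigma ennreal_mult tail_prob_nonneg descent_weight_nonneg
        mult.assoc)
  also have "\<dots> = (\<integral>\<^sup>+i. ennreal (p * tail_prob P i) \<partial>count_space UNIV) ^ Suc m"
    by (simp add: nn_integral_cmult nn_integral_multc Suc)
  finally show ?case .
qed

lemma nn_integral_descent_weight:
  assumes "0 \<le> p"
  shows "(\<integral>\<^sup>+w. ennreal (descent_weight P p w) \<partial>count_space UNIV)
    = (\<Sum>m. (\<integral>\<^sup>+i. ennreal (p * tail_prob P i) \<partial>count_space UNIV) ^ m)"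
proof -
  have "ennreal (descent_weight P p w) = (\<Sum>m. ennreal (descent_weight P p w) * indicator {w. length w = m} w)"
    for w
  proof -
    have "(\<lambda>m. ennreal (descent_weight P p w) * indicator {w. length w = m} w)
        = (\<lambda>m. if m = length w then ennreal (descent_weight P p w) else 0)"
      by (auto simp: indicator_def)
    then show ?thesis
      using sums_single[of "length w" "\<lambda>_. ennreal (descent_weight P p w)"] by (simp add: sums_iff)
  qed
  then have "(\<integral>\<^sup>+w. ennreal (descent_weight P p w) \<partial>count_space UNIV)
      = (\<Sum>m. \<integral>\<^sup>+w. ennreal (descent_weight P p w) * indicator {w. length w = m} w \<partial>count_space UNIV)"
    by (simp add: nn_integral_suminf[symmetric])
  then show ?thesis
    by (simp add: nn_integral_count_space_indicator[symmetric] nn_integral_descent_weight_length[OF assms])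
qed

lemma nn_integral_descent_weight_off_spine:
  assumes "0 \<le> p"
  shows "(\<integral>\<^sup>+w. ennreal (descent_weight P p w) \<partial>count_space {w. w = [] \<or> last w \<noteq> 0})
    = 1 + (\<integral>\<^sup>+w. ennreal (descent_weight P p w) \<partial>count_space UNIV)
        * (\<integral>\<^sup>+i. ennreal (p * tail_prob P i) \<partial>count_space {i. i \<noteq> 0})"
proof -
  let ?W = "{w :: nat list. w \<noteq> [] \<and> last w \<noteq> 0}"
  have "bij_betw (\<lambda>(u, i). u @ [i]) (UNIV \<times> {i. i \<noteq> 0}) ?W"
    by (rule bij_betwI[where g = "\<lambda>w. (butlast w, last w)"]) auto
  then have "(\<integral>\<^sup>+w. ennreal (descent_weight P p w) \<partial>count_space ?W)
      = (\<integral>\<^sup>+z. ennreal (descent_weight P p ((\<lambda>(u, i). u @ [i]) z))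
          \<partial>count_space (UNIV \<times> {i. i \<noteq> 0}))"
    by (rule nn_integral_bij_count_space[symmetric])
  also have "\<dots> = (\<integral>\<^sup>+u. \<integral>\<^sup>+i. ennreal (descent_weight P p u) * ennreal (p * tail_prob P i)
      \<partial>count_space {i. i \<noteq> 0} \<partial>count_space UNIV)"
    using assms
    by (simp add: nn_integral_count_space_Sigma descent_weight_snoc ennreal_mult tail_prob_nonneg
        descent_weight_nonneg)
  also have "\<dots> = (\<integral>\<^sup>+w. ennreal (descent_weight P p w) \<partial>count_space UNIV)
      * (\<integral>\<^sup>+i. ennreal (p * tail_prob P i) \<partial>count_space {i. i \<noteq> 0})"
    by (simp add: nn_integral_cmult nn_integral_multc)
  finally have "(\<integral>\<^sup>+w. ennreal (descent_weight P p w) \<partial>count_space ?W) = \<dots>" .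
  moreover have "{w. w = [] \<or> last w \<noteq> 0} = {[]} \<union> ?W" by auto
  ultimately show ?thesis
    using nn_integral_count_space_Un[of "{[]}" ?W "\<lambda>w. ennreal (descent_weight P p w)"]
    by (simp add: nn_integral_count_space_finite)
qed

lemma nn_integral_tail_prob_split_0:
  assumes "pmf P 0 = 0"
  shows "(\<integral>\<^sup>+i. ennreal (p * tail_prob P i) \<partial>count_space UNIV)
    = ennreal p + (\<integral>\<^sup>+i. ennreal (p * tail_prob P i) \<partial>count_space {i. i \<noteq> 0})"
proof -
  have "{0} \<union> {i :: nat. i \<noteq> 0} = UNIV" by auto
  then show ?thesis
    using nn_integral_count_space_Un[of "{0}" "{i :: nat. i \<noteq> 0}" "\<lambda>i. ennreal (p * tail_prob P i)"]
    by (simp add: nn_integral_count_space_finite tail_prob_0[OF assms])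
qed

lemma nn_integral_tail_prob_eq_mean:
  assumes "summable (\<lambda>k. real k * pmf P k)"
  shows "(\<integral>\<^sup>+i. ennreal (tail_prob P i) \<partial>count_space UNIV) = ennreal (\<Sum>k. real k * pmf P k)"
proof -
  have "(\<integral>\<^sup>+i. ennreal (tail_prob P i) \<partial>count_space UNIV)
      = (\<Sum>i. \<integral>\<^sup>+n. indicator {n. i < n} n \<partial>measure_pmf P)"
    by (simp add: nn_integral_count_space_nat tail_prob_def measure_pmf.emeasure_eq_measure[symmetric])
  also have "\<dots> = (\<integral>\<^sup>+n. (\<Sum>i. indicator {n. i < n} n) \<partial>measure_pmf P)"
    by (rule nn_integral_suminf[symmetric]) auto
  also have "\<dots> = (\<integral>\<^sup>+n. ennreal (real n) \<partial>measure_pmf P)"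
  proof (intro nn_integral_cong)
    fix n :: nat
    have "(\<lambda>i. if i < n then (1::ennreal) else 0) sums (\<Sum>i | i < n. 1)"
      by (rule sums_If_finite) simp
    moreover have "(\<lambda>i. indicator {n. i < n} n :: ennreal) = (\<lambda>i. if i < n then 1 else 0)"
      by (auto simp: indicator_def)
    ultimately show "(\<Sum>i. indicator {n. i < n} n) = ennreal (real n)"
      by (simp add: sums_iff indicator_def ennreal_of_nat_eq_real_of_nat)
  qed
  also have "\<dots> = (\<Sum>n. ennreal (real n * pmf P n))"
    by (simp add: nn_integral_measure_pmf nn_integral_count_space_nat ennreal_mult' mult.commute)
  also have "\<dots> = ennreal (\<Sum>k. real k * pmf P k)"
    using assms by (intro suminf_ennreal2) auto
  finally show ?thesis .
qed

lemma one_le_offspring_mean: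
  assumes "pmf P 0 = 0" "summable (\<lambda>k. real k * pmf P k)"
  shows "1 \<le> (\<Sum>k. real k * pmf P k)"
proof -
  have "ennreal 1 \<le> (\<integral>\<^sup>+i. ennreal (tail_prob P i) \<partial>count_space UNIV)"
    using nn_integral_tail_prob_split_0[OF assms(1), of 1] by simp
  then show ?thesis
    using nn_integral_tail_prob_eq_mean[OF assms(2)] by (simp add: ennreal_le_iff2)
qed

lemma expected_cluster_size_series:
  assumes "pmf P 0 = 0" "summable (\<lambda>k. real k * pmf P k)" "\<mu> = (\<Sum>k. real k * pmf P k)"
    and "0 \<le> p" "p \<le> 1" "0 \<le> q" "q \<le> 1"
  shows "expected_cluster_size P p q r
    = (\<Sum>k<r. ennreal (q ^ (r - k)) * (1 + (\<Sum>m. ennreal (\<mu> * p) ^ m) * ennreal (\<mu> * p - p)))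
      + (\<Sum>m. ennreal (\<mu> * p) ^ m)"
proof -
  let ?G = "\<integral>\<^sup>+w. ennreal (descent_weight P p w) \<partial>count_space UNIV"
  let ?c = "\<integral>\<^sup>+i. ennreal (p * tail_prob P i) \<partial>count_space {i. i \<noteq> 0}"
  have "0 \<le> \<mu>" using one_le_offspring_mean[OF assms(1,2)] assms(3) by simp
  then have mean: "(\<integral>\<^sup>+i. ennreal (p * tail_prob P i) \<partial>count_space UNIV) = ennreal (\<mu> * p)"
    using nn_integral_tail_prob_eq_mean[OF assms(2)] assms(3,4)
    by (simp add: ennreal_mult tail_prob_nonneg nn_integral_cmult mult.commute)
  have mean_split: "ennreal p + ?c = ennreal (\<mu> * p)"
    using nn_integral_tail_prob_split_0[OF assms(1), of p] mean by simp
  have "?c = (ennreal p + ?c) - ennreal p" by simp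
  also have "\<dots> = ennreal (\<mu> * p - p)"
    using assms(4) by (simp only: mean_split ennreal_minus)
  finally have c: "?c = ennreal (\<mu> * p - p)" .
  have G: "?G = (\<Sum>m. ennreal (\<mu> * p) ^ m)"
    using nn_integral_descent_weight[OF assms(4)] mean by simp
  have "expected_cluster_size P p q r
      = (\<Sum>k<r. \<integral>\<^sup>+w. ennreal (q ^ (r - k)) * ennreal (descent_weight P p w)
            \<partial>count_space {w. w = [] \<or> last w \<noteq> 0}) + ?G"
    using assms(4,6) by (simp add: expected_cluster_size_eq_nn_integral[OF assms(1,4-7)]
        nn_integral_spine_coords ennreal_mult descent_weight_nonneg)
  also have "\<dots> = (\<Sum>k<r. ennreal (q ^ (r - k)) * (1 + ?G * ?c)) + ?G"
    using nn_integral_descent_weight_off_spine[OF assms(4)] by (simp add: nn_integral_cmult)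
  finally show ?thesis
    unfolding G c .
qed

lemma cluster_size_closed_form:
  fixes a p q :: real
  assumes "0 \<le> p" "p \<le> a" "a < 1" "0 \<le> q" "q < 1"
  shows "(\<Sum>k<r. ennreal (q ^ (r - k)) * (1 + ennreal (1 / (1 - a)) * ennreal (a - p)))
      + ennreal (1 / (1 - a)) = ennreal (1 / (1 - a) * (1 + q * ((1 - q ^ r) / (1 - q)) * (1 - p)))"
proof -
  define g where "g = 1 / (1 - a)"
  have g: "0 \<le> g" "0 \<le> g * (1 - p)" "1 + g * (a - p) = g * (1 - p)"
    using assms by (auto simp: g_def field_simps)
  have "1 + ennreal g * ennreal (a - p) = ennreal (g * (1 - p))"
    unfolding g(3)[symmetric] using assms g(1) by (simp add: ennreal_mult ennreal_plus)
  then have "(\<Sum>k<r. ennreal (q ^ (r - k)) * (1 + ennreal g * ennreal (a - p)))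
      = (\<Sum>k<r. ennreal (q ^ (r - k) * (g * (1 - p))))"
    using assms g by (simp add: ennreal_mult)
  also have "\<dots> = ennreal ((\<Sum>k<r. q ^ (r - k)) * (g * (1 - p)))"
    using assms g by (simp add: sum_ennreal sum_distrib_right)
  finally have "(\<Sum>k<r. ennreal (q ^ (r - k)) * (1 + ennreal g * ennreal (a - p))) + ennreal g
      = ennreal ((\<Sum>k<r. q ^ (r - k)) * (g * (1 - p)) + g)"
    using assms g by (simp add: ennreal_plus sum_nonneg)
  also have "\<dots> = ennreal (g * (1 + q * ((1 - q ^ r) / (1 - q)) * (1 - p)))"
    using assms by (simp add: sum_lessThan_power_diff algebra_simps)
  finally show ?thesis
    unfolding g_def .
qed

theorem mainTheorem2:
  fixes P :: "nat pmf" and p q \<mu> :: real and r :: nat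
  assumes "pmf P 0 = 0"
    and "summable (\<lambda>k. real k * pmf P k)"
    and "\<mu> = (\<Sum>k. real k * pmf P k)"
    and "0 < p" "p < 1" "0 < q" "q < 1"
  shows "(\<mu> * p < 1 \<longrightarrow> expected_cluster_size P p q r =
            ennreal (1 / (1 - \<mu> * p) * (1 + q * ((1 - q ^ r) / (1 - q)) * (1 - p))))
       \<and> (\<mu> * p > 1 \<longrightarrow> expected_cluster_size P p q r = \<infinity>)"
proof -
  have "1 \<le> \<mu>"
    using one_le_offspring_mean[OF assms(1,2)] assms(3) by simp
  then have p_le: "p \<le> \<mu> * p"
    using assms(4) by simp
  have E: "expected_cluster_size P p q r
    = (\<Sum>k<r. ennreal (q ^ (r - k)) * (1 + (\<Sum>m. ennreal (\<mu> * p) ^ m) * ennreal (\<mu> * p - p)))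
      + (\<Sum>m. ennreal (\<mu> * p) ^ m)"
    using assms by (intro expected_cluster_size_series) auto
  show ?thesis
  proof (intro conjI impI)
    assume "\<mu> * p < 1"
    then have "(\<Sum>m. ennreal (\<mu> * p) ^ m) = ennreal (1 / (1 - \<mu> * p))"
      using p_le assms(4) by (intro suminf_ennreal_geometric) auto
    then show "expected_cluster_size P p q r =
        ennreal (1 / (1 - \<mu> * p) * (1 + q * ((1 - q ^ r) / (1 - q)) * (1 - p)))"
      using E cluster_size_closed_form[of p "\<mu> * p" q r] p_le \<open>\<mu> * p < 1\<close> assms(4-7) by simp
  next
    assume "1 < \<mu> * p"
    then have "(\<Sum>m. ennreal (\<mu> * p) ^ m) = \<infinity>"
      by (intro suminf_ennreal_geometric_infinite) simp
    with E show "expected_cluster_size P p q r = \<infinity>" by simp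
  qed
qed

end
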